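(* Let $D_L$ and $D_R$ be discrete power-law (Zipfian) distributions on the positive integers with parameters $(\alpha_L,1,\infty)$ and $(\alpha_R,1,\infty)$, with means $\mu_L=\mathbb{E}[D_L]$, $\mu_R=\mathbb{E}[D_R]$, and suppose $n_L\mu_L=n_R\mu_R$. Consider the following sampler: draw i.i.d. weights $w_u\sim D_L$ for $u\in L=\{1,\dots,n_L\}$ and $w_v\sim D_R$ for $v\in R$ ($|R|=n_R$); for each pair $(a,b)$ of a distinct value $a$ occurring among the left weights and a distinct value $b$ occurring among the right weights, let $V_L=\{u\in L: w_u=a\}$, $V_R=\{v\in R:w_v=b\}$, draw $e\sim\mathrm{Binomial}(|V_L||V_R|,\ ab/(n_R\mu_R))$, and add $e$ edges chosen uniformly without replacement from $V_L\times V_R$. Assuming each binomial draw and each per-pair bookkeeping step costs $O(1)$ time and each edge costs $O(1)$ time to draw and add, the expected running time is $O\!\left(n_L^{1/(\alpha_L-1)}n_R^{1/(\alpha_R-1)}+\mu_Ln_L\right)$. For $\alpha_L,\alpha_R>3$ the second term dominates, so the running time is within a constant factor of the expected number of output edges, hence asymptotically optimal.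
   Context: Discrete power-law (Zipfian) distribution with parameters $(\alpha,1,\infty)$, $\alpha>1$: $\Pr[W=k]\propto k^{-\alpha}$ for integers $k\ge1$. (For $\alpha\le 2$ the mean is infinite; the statement is meaningful when $\mu_L,\mu_R<\infty$.) *)

theory Defs
  imports "HOL-Probability.Probability"
begin

definition zipf_weight :: "real \<Rightarrow> nat \<Rightarrow> real" where
  "zipf_weight \<alpha> k = (if k \<ge> 1 then real k powr (-\<alpha>) else 0)"

definition zipf_pmf :: "real \<Rightarrow> nat pmf" where
  "zipf_pmf \<alpha> = embed_pmf (\<lambda>k. zipf_weight \<alpha> k / (\<Sum>j. zipf_weight \<alpha> j))"

definition zipf_mean :: "real \<Rightarrow> real" where
  "zipf_mean \<alpha> = measure_pmf.expectation (zipf_pmf \<alpha>) real"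

text \<open>The result is the pair (running time, number of output edges),
  where the running time counts one unit per weight draw, one unit per pair (binomial draw and
  bookkeeping), and one unit per edge drawn and added.  Since the e(a,b) edges are chosen
  uniformly without replacement from V_L x V_R, exactly e(a,b) distinct edges are output.\<close>

definition sampler_pmf :: "real \<Rightarrow> real \<Rightarrow> nat \<Rightarrow> nat \<Rightarrow> (nat \<times> nat) pmf" where
  "sampler_pmf \<alpha>L \<alpha>R nL nR =
     do {
       wL \<leftarrow> Pi_pmf {..<nL} 0 (\<lambda>_. zipf_pmf \<alpha>L);
       wR \<leftarrow> Pi_pmf {..<nR} 0 (\<lambda>_. zipf_pmf \<alpha>R);
       let P = (wL ` {..<nL}) \<times> (wR ` {..<nR});
       e \<leftarrow> Pi_pmf P 0 (\<lambda>(a, b).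
              binomial_pmf (card {u\<in>{..<nL}. wL u = a} * card {v\<in>{..<nR}. wR v = b})
                (min 1 (real a * real b / (real nR * zipf_mean \<alpha>R))));
       return_pmf (nL + nR + card P + (\<Sum>x\<in>P. e x), \<Sum>x\<in>P. e x)
     }"

definition expected_time :: "real \<Rightarrow> real \<Rightarrow> nat \<Rightarrow> nat \<Rightarrow> real" where
  "expected_time \<alpha>L \<alpha>R nL nR =
     measure_pmf.expectation (sampler_pmf \<alpha>L \<alpha>R nL nR) (\<lambda>r. real (fst r))"

definition expected_edges :: "real \<Rightarrow> real \<Rightarrow> nat \<Rightarrow> nat \<Rightarrow> real" where
  "expected_edges \<alpha>L \<alpha>R nL nR =
     measure_pmf.expectation (sampler_pmf \<alpha>L \<alpha>R nL nR) (\<lambda>r. real (snd r))"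

end

theory Submission
  imports Defs
begin

text \<open>
  Given the weights, the pair (a, b) receives a binomial number of edges with mean
  |V_L| |V_R| min(1, a b / D), where D = n_R mu_R.  Dropping the min, the conditional edge mean is at
  most (sum of left weights)(sum of right weights) / D, whose expectation over the independent weights
  is n_L mu_L n_R mu_R / D = n_L mu_L.  The number of weight pairs is paid for by the same total weight:
  d distinct positive integers sum to at least d (d - 1) / 2, so |P| <= (d_L^2 + d_R^2) / 2 is at most
  the total weight plus n_L + n_R, which has expectation O(mu_L n_L) because n_R <= n_R mu_R = n_L mu_L.
  Hence the expected running time is at most 7 mu_L n_L.
  Conversely all weights are at least 1, so every pair of vertices is joined with probability at least
  1 / D and the expected number of edges is at least n_L n_R / D = n_L / mu_R.  The running time is
  therefore within the factor 7 mu_L mu_R of the output size whenever the means are finite.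
\<close>

lemma card_times_pred_le_sum:
  fixes A :: "nat set"
  assumes "finite A"
  shows "card A * (card A - 1) \<le> 2 * \<Sum>A"
  using assms
proof (induction A rule: finite_ranking_induct[where f = id])
  case (insert x A)
  show ?case
  proof (cases "x \<in> A")
    case False
    with insert.hyps have "A \<subseteq> {..<x}" by (fastforce simp: less_le)
    then have "card A \<le> x" using card_mono[of "{..<x}" A] by simp
    with False insert.hyps insert.IH show ?thesis by (cases "card A") auto
  qed (use insert.IH in \<open>simp add: insert_absorb\<close>)
qed simp

lemma card_image_squared_le:
  fixes w :: "'a \<Rightarrow> nat"
  assumes "finite U"
  shows "card (w ` U) ^ 2 \<le> 2 * (\<Sum>u\<in>U. w u) + card U"
proof -
  let ?d = "card (w ` U)"
  have "?d * (?d - 1) \<le> 2 * \<Sum>(w ` U)"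
    using assms by (intro card_times_pred_le_sum) simp
  also have "\<Sum>(w ` U) \<le> (\<Sum>u\<in>U. w u)"
    using sum_image_le[of U id w] assms by simp
  finally have "?d * (?d - 1) \<le> 2 * (\<Sum>u\<in>U. w u)" by simp
  moreover have "?d \<le> card U" by (rule card_image_le[OF assms])
  ultimately show ?thesis by (cases ?d) (auto simp: power2_eq_square)
qed

lemma card_image_times_image_le:
  fixes wL :: "'a \<Rightarrow> nat" and wR :: "'b \<Rightarrow> nat"
  assumes "finite U" "finite V"
  shows "card (wL ` U \<times> wR ` V) \<le> (\<Sum>u\<in>U. wL u) + (\<Sum>v\<in>V. wR v) + card U + card V"
proof -
  let ?x = "card (wL ` U)" and ?y = "card (wR ` V)"
  have "real (2 * (?x * ?y)) \<le> real (?x ^ 2 + ?y ^ 2)"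
    using sum_squares_bound[of "real ?x" "real ?y"] by simp
  then have "2 * (?x * ?y) \<le> ?x ^ 2 + ?y ^ 2"
    by (simp only: of_nat_le_iff)
  also have "\<dots> \<le> 2 * (\<Sum>u\<in>U. wL u) + card U + (2 * (\<Sum>v\<in>V. wR v) + card V)"
    using card_image_squared_le[OF assms(1), of wL] card_image_squared_le[OF assms(2), of wR]
    by simp
  finally show ?thesis by (simp add: card_cartesian_product)
qed

lemma sum_card_fibres:
  fixes w :: "'a \<Rightarrow> 'b" and g :: "'b \<Rightarrow> 'c :: comm_semiring_1"
  assumes "finite U"
  shows "(\<Sum>a\<in>w ` U. of_nat (card {u\<in>U. w u = a}) * g a) = (\<Sum>u\<in>U. g (w u))"
  using sum.image_gen[OF assms, of "\<lambda>u. g (w u)" w] by simp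

lemma nn_integral_binomial_pmf_real:
  assumes p: "p \<in> {0..1}"
  shows "nn_integral (measure_pmf (binomial_pmf n p)) of_nat = ennreal (n * p)"
proof (induction n)
  case 0
  show ?case using p by (simp add: binomial_pmf_0)
next
  case (Suc n)
  have bernoulli: "nn_integral (measure_pmf (bernoulli_pmf p)) of_bool = ennreal p"
    using p by (subst nn_integral_measure_pmf_support[where A = UNIV]) (auto simp: UNIV_bool)
  have "nn_integral (measure_pmf (binomial_pmf (Suc n) p)) of_nat =
        nn_integral (measure_pmf (bernoulli_pmf p)) of_bool +
        nn_integral (measure_pmf (binomial_pmf n p)) of_nat"
    using p by (simp add: binomial_pmf_Suc nn_integral_add measure_pmf.emeasure_space_1 of_bool_def)
  also have "\<dots> = ennreal (p + n * p)"
    using p by (simp add: bernoulli Suc.IH ennreal_plus)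
  finally show ?case by (simp add: algebra_simps)
qed

lemma nn_integral_Pi_pmf_sum:
  fixes g :: "'a \<Rightarrow> 'b \<Rightarrow> ennreal"
  assumes "finite A"
  shows "(\<integral>\<^sup>+f. (\<Sum>x\<in>A. g x (f x)) \<partial>Pi_pmf A dflt p) = (\<Sum>x\<in>A. \<integral>\<^sup>+y. g x y \<partial>p x)"
proof -
  have "(\<integral>\<^sup>+f. (\<Sum>x\<in>A. g x (f x)) \<partial>Pi_pmf A dflt p) =
        (\<Sum>x\<in>A. \<integral>\<^sup>+y. g x y \<partial>map_pmf (\<lambda>f. f x) (Pi_pmf A dflt p))"
    by (simp add: nn_integral_sum)
  also have "\<dots> = (\<Sum>x\<in>A. \<integral>\<^sup>+y. g x y \<partial>p x)"
    using assms by (intro sum.cong) (simp_all add: Pi_pmf_component)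
  finally show ?thesis .
qed

lemma nn_integral_Pi_binomial_pmf_sum:
  assumes "finite A" and "\<And>x. x \<in> A \<Longrightarrow> p x \<in> {0..1}"
  shows "(\<integral>\<^sup>+e. (\<Sum>x\<in>A. of_nat (e x)) \<partial>Pi_pmf A 0 (\<lambda>x. binomial_pmf (m x) (p x)))
           = ennreal (\<Sum>x\<in>A. real (m x) * p x)"
proof -
  have "(\<integral>\<^sup>+e. (\<Sum>x\<in>A. of_nat (e x)) \<partial>Pi_pmf A 0 (\<lambda>x. binomial_pmf (m x) (p x)))
          = (\<Sum>x\<in>A. \<integral>\<^sup>+k. of_nat k \<partial>binomial_pmf (m x) (p x))"
    by (rule nn_integral_Pi_pmf_sum[OF assms(1)])
  also have "\<dots> = (\<Sum>x\<in>A. ennreal (real (m x) * p x))"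
    using assms(2) by (intro sum.cong) (simp_all add: nn_integral_binomial_pmf_real)
  finally show ?thesis
    using assms(2) by simp
qed

lemma set_pmf_zipf_pmf:
  assumes "\<alpha> > 1"
  shows "set_pmf (zipf_pmf \<alpha>) = {1..}"
proof -
  define S where "S = (\<Sum>j. zipf_weight \<alpha> j)"
  have summable: "summable (zipf_weight \<alpha>)"
  proof -
    have "zipf_weight \<alpha> = (\<lambda>k. real k powr -\<alpha>)"
      by (auto simp: zipf_weight_def)
    then show ?thesis using assms by (simp add: summable_real_powr_iff)
  qed
  have "0 < S"
    unfolding S_def by (rule suminf_pos2[OF summable, of 1]) (auto simp: zipf_weight_def)
  have nonneg: "0 \<le> zipf_weight \<alpha> k / S" for k
    using \<open>0 < S\<close> by (simp add: zipf_weight_def)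
  have "(\<integral>\<^sup>+k. ennreal (zipf_weight \<alpha> k / S) \<partial>count_space UNIV) = ennreal (\<Sum>k. zipf_weight \<alpha> k / S)"
    by (simp add: nn_integral_count_space_nat suminf_ennreal2 nonneg summable_divide summable)
  also have "(\<Sum>k. zipf_weight \<alpha> k / S) = 1"
    using \<open>0 < S\<close> by (simp add: suminf_divide summable S_def[symmetric])
  finally have "set_pmf (zipf_pmf \<alpha>) = {k. zipf_weight \<alpha> k / S \<noteq> 0}"
    unfolding zipf_pmf_def S_def[symmetric] by (intro set_embed_pmf nonneg) simp
  with \<open>0 < S\<close> show ?thesis by (auto simp: zipf_weight_def)
qed

lemma nn_integral_zipf_pmf:
  assumes "integrable (measure_pmf (zipf_pmf \<alpha>)) real"
  shows "(\<integral>\<^sup>+k. of_nat k \<partial>zipf_pmf \<alpha>) = ennreal (zipf_mean \<alpha>)"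
  unfolding zipf_mean_def ennreal_of_nat_eq_real_of_nat using assms
  by (intro nn_integral_eq_integral) auto

lemma zipf_mean_ge_1:
  assumes "\<alpha> > 1" and "integrable (measure_pmf (zipf_pmf \<alpha>)) real"
  shows "zipf_mean \<alpha> \<ge> 1"
proof -
  have "measure_pmf.expectation (zipf_pmf \<alpha>) (\<lambda>_. 1) \<le> measure_pmf.expectation (zipf_pmf \<alpha>) real"
    using assms by (intro integral_mono_AE) (auto simp: AE_measure_pmf_iff set_pmf_zipf_pmf)
  then show ?thesis by (simp add: zipf_mean_def)
qed

abbreviation zipf_weights :: "nat \<Rightarrow> real \<Rightarrow> (nat \<Rightarrow> nat) pmf" where
  "zipf_weights n \<alpha> \<equiv> Pi_pmf {..<n} 0 (\<lambda>_. zipf_pmf \<alpha>)"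

lemma zipf_weights_ge_1:
  assumes "\<alpha> > 1" and "w \<in> set_pmf (zipf_weights n \<alpha>)" and "u < n"
  shows "w u \<ge> 1"
  using assms set_Pi_pmf_subset'[of "{..<n}" 0 "\<lambda>_. zipf_pmf \<alpha>"]
  by (force simp: PiE_dflt_def set_pmf_zipf_pmf)

lemma nn_integral_zipf_weights_sum:
  assumes "integrable (measure_pmf (zipf_pmf \<alpha>)) real"
  shows "(\<integral>\<^sup>+w. of_nat (\<Sum>u<n. w u) \<partial>zipf_weights n \<alpha>) = ennreal (real n * zipf_mean \<alpha>)"
proof -
  have "(\<integral>\<^sup>+w. of_nat (\<Sum>u<n. w u) \<partial>zipf_weights n \<alpha>) = (\<Sum>u<n. \<integral>\<^sup>+k. of_nat k \<partial>zipf_pmf \<alpha>)"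
    using nn_integral_Pi_pmf_sum[where A = "{..<n}" and g = "\<lambda>_. of_nat" and p = "\<lambda>_. zipf_pmf \<alpha>"]
    by simp
  also have "\<dots> = ennreal (real n * zipf_mean \<alpha>)"
    by (simp add: nn_integral_zipf_pmf[OF assms]) (simp add: ennreal_mult' ennreal_of_nat_eq_real_of_nat)
  finally show ?thesis .
qed

definition conditional_edge_mean :: "nat \<Rightarrow> nat \<Rightarrow> real \<Rightarrow> (nat \<Rightarrow> nat) \<Rightarrow> (nat \<Rightarrow> nat) \<Rightarrow> real" where
  "conditional_edge_mean nL nR D wL wR = (\<Sum>(a, b) \<in> wL ` {..<nL} \<times> wR ` {..<nR}.
      real (card {u\<in>{..<nL}. wL u = a} * card {v\<in>{..<nR}. wR v = b}) * min 1 (real a * real b / D))"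

lemma conditional_edge_mean_eq:
  "conditional_edge_mean nL nR D wL wR = (\<Sum>a\<in>wL ` {..<nL}. \<Sum>b\<in>wR ` {..<nR}.
      real (card {u\<in>{..<nL}. wL u = a}) * real (card {v\<in>{..<nR}. wR v = b}) * min 1 (real a * real b / D))"
  by (simp add: conditional_edge_mean_def sum.cartesian_product)

lemma conditional_edge_mean_le:
  assumes "D \<ge> 0"
  shows "conditional_edge_mean nL nR D wL wR \<le> real (\<Sum>u<nL. wL u) * real (\<Sum>v<nR. wR v) / D"
proof -
  let ?cL = "\<lambda>a. real (card {u\<in>{..<nL}. wL u = a})" and ?cR = "\<lambda>b. real (card {v\<in>{..<nR}. wR v = b})"
  have "conditional_edge_mean nL nR D wL wR
      \<le> (\<Sum>a\<in>wL ` {..<nL}. \<Sum>b\<in>wR ` {..<nR}. ?cL a * ?cR b * (real a * real b / D))"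
    unfolding conditional_edge_mean_eq by (intro sum_mono mult_left_mono) auto
  also have "\<dots> = (\<Sum>a\<in>wL ` {..<nL}. ?cL a * real a) * (\<Sum>b\<in>wR ` {..<nR}. ?cR b * real b) / D"
    by (simp add: sum_product sum_divide_distrib algebra_simps)
  also have "\<dots> = real (\<Sum>u<nL. wL u) * real (\<Sum>v<nR. wR v) / D"
    by (simp only: sum_card_fibres finite_lessThan of_nat_sum)
  finally show ?thesis .
qed

lemma conditional_edge_mean_ge:
  assumes "D \<ge> 1" and "\<And>u. u < nL \<Longrightarrow> wL u \<ge> 1" and "\<And>v. v < nR \<Longrightarrow> wR v \<ge> 1"
  shows "real nL * real nR / D \<le> conditional_edge_mean nL nR D wL wR"
proof -
  let ?cL = "\<lambda>a. real (card {u\<in>{..<nL}. wL u = a})" and ?cR = "\<lambda>b. real (card {v\<in>{..<nR}. wR v = b})"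
  have "real nL * real nR / D = (\<Sum>a\<in>wL ` {..<nL}. ?cL a * 1) * (\<Sum>b\<in>wR ` {..<nR}. ?cR b * 1) / D"
    by (simp only: sum_card_fibres finite_lessThan) simp
  also have "\<dots> = (\<Sum>a\<in>wL ` {..<nL}. \<Sum>b\<in>wR ` {..<nR}. ?cL a * ?cR b * (1 / D))"
    by (simp add: sum_product sum_divide_distrib)
  also have "\<dots> \<le> conditional_edge_mean nL nR D wL wR"
    unfolding conditional_edge_mean_eq
  proof (intro sum_mono mult_left_mono)
    fix a b assume "a \<in> wL ` {..<nL}" "b \<in> wR ` {..<nR}"
    then have "1 \<le> a * b"
      using assms(2,3) by auto
    then have "1 \<le> real a * real b"
      by (metis of_nat_1 of_nat_le_iff of_nat_mult)
    then show "1 / D \<le> min 1 (real a * real b / D)"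
      using assms(1) by (auto intro: divide_right_mono)
  qed auto
  finally show ?thesis .
qed

lemma sampler_cost_le:
  fixes wL wR :: "nat \<Rightarrow> nat" and nL nR :: nat
  assumes "D \<ge> 0"
  defines "SL \<equiv> \<Sum>u<nL. wL u" and "SR \<equiv> \<Sum>v<nR. wR v"
  shows "of_nat (nL + nR + card (wL ` {..<nL} \<times> wR ` {..<nR})) + ennreal (conditional_edge_mean nL nR D wL wR)
      \<le> of_nat (2 * nL + 2 * nR + SL + SR) + ennreal (1 / D) * of_nat SL * of_nat SR"
proof -
  let ?H = "conditional_edge_mean nL nR D wL wR"
  have "card (wL ` {..<nL} \<times> wR ` {..<nR}) \<le> SL + SR + nL + nR"
    using card_image_times_image_le[of "{..<nL}" "{..<nR}" wL wR] by (simp add: SL_def SR_def)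
  then have "real (card (wL ` {..<nL} \<times> wR ` {..<nR})) \<le> real (SL + SR + nL + nR)"
    by (simp only: of_nat_le_iff)
  moreover have "?H \<le> 1 / D * real SL * real SR"
    using conditional_edge_mean_le[OF assms(1)] by (simp add: SL_def SR_def)
  moreover have "?H \<ge> 0"
    using assms(1) by (auto simp: conditional_edge_mean_def intro: sum_nonneg)
  ultimately have "ennreal (real (nL + nR + card (wL ` {..<nL} \<times> wR ` {..<nR})) + ?H)
      \<le> ennreal (real (2 * nL + 2 * nR + SL + SR) + 1 / D * real SL * real SR)"
    by (intro ennreal_leI) (simp only: of_nat_add of_nat_mult)
  then show ?thesis
    using \<open>?H \<ge> 0\<close> assms(1)
    by (simp only: ennreal_of_nat_eq_real_of_nat ennreal_plus ennreal_mult of_nat_0_le_iff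
        mult_nonneg_nonneg divide_nonneg_nonneg add_nonneg_nonneg zero_le_one)
qed

lemma nn_integral_sampler_pmf:
  assumes D: "D = real nR * zipf_mean \<alpha>R" and "D \<ge> 0"
  shows "(\<integral>\<^sup>+r. of_nat (snd r) \<partial>sampler_pmf \<alpha>L \<alpha>R nL nR) =
           (\<integral>\<^sup>+wL. \<integral>\<^sup>+wR. ennreal (conditional_edge_mean nL nR D wL wR)
             \<partial>zipf_weights nR \<alpha>R \<partial>zipf_weights nL \<alpha>L)"
    and "(\<integral>\<^sup>+r. of_nat (fst r) \<partial>sampler_pmf \<alpha>L \<alpha>R nL nR) =
           (\<integral>\<^sup>+wL. \<integral>\<^sup>+wR. of_nat (nL + nR + card (wL ` {..<nL} \<times> wR ` {..<nR}))
               + ennreal (conditional_edge_mean nL nR D wL wR)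
             \<partial>zipf_weights nR \<alpha>R \<partial>zipf_weights nL \<alpha>L)"
proof -
  have edges: "(\<integral>\<^sup>+e. of_nat (\<Sum>x\<in>wL ` {..<nL} \<times> wR ` {..<nR}. e x)
      \<partial>Pi_pmf (wL ` {..<nL} \<times> wR ` {..<nR}) 0 (\<lambda>(a, b).
         binomial_pmf (card {u\<in>{..<nL}. wL u = a} * card {v\<in>{..<nR}. wR v = b})
           (min 1 (real a * real b / D)))) = ennreal (conditional_edge_mean nL nR D wL wR)" for wL wR
  proof -
    have "min 1 (real a * real b / D) \<in> {0..1}" for a b
      using \<open>D \<ge> 0\<close> by simp
    then show ?thesis
      by (simp add: case_prod_unfold nn_integral_Pi_binomial_pmf_sum conditional_edge_mean_def)
  qed
  have cost: "(\<integral>\<^sup>+e. of_nat (c + (\<Sum>x\<in>wL ` {..<nL} \<times> wR ` {..<nR}. e x))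
      \<partial>Pi_pmf (wL ` {..<nL} \<times> wR ` {..<nR}) 0 (\<lambda>(a, b).
         binomial_pmf (card {u\<in>{..<nL}. wL u = a} * card {v\<in>{..<nR}. wR v = b})
           (min 1 (real a * real b / D))))
      = of_nat c + ennreal (conditional_edge_mean nL nR D wL wR)" for c wL wR
    by (subst of_nat_add, subst nn_integral_add)
       (simp_all only: edges, simp_all add: measure_pmf.emeasure_space_1)
  show "(\<integral>\<^sup>+r. of_nat (snd r) \<partial>sampler_pmf \<alpha>L \<alpha>R nL nR) =
           (\<integral>\<^sup>+wL. \<integral>\<^sup>+wR. ennreal (conditional_edge_mean nL nR D wL wR)
             \<partial>zipf_weights nR \<alpha>R \<partial>zipf_weights nL \<alpha>L)"
    unfolding sampler_pmf_def D[symmetric]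
    by (simp only: nn_integral_bind_pmf Let_def nn_integral_return_pmf zero_le snd_conv edges)
  show "(\<integral>\<^sup>+r. of_nat (fst r) \<partial>sampler_pmf \<alpha>L \<alpha>R nL nR) =
           (\<integral>\<^sup>+wL. \<integral>\<^sup>+wR. of_nat (nL + nR + card (wL ` {..<nL} \<times> wR ` {..<nR}))
               + ennreal (conditional_edge_mean nL nR D wL wR)
             \<partial>zipf_weights nR \<alpha>R \<partial>zipf_weights nL \<alpha>L)"
    unfolding sampler_pmf_def D[symmetric]
    by (simp only: nn_integral_bind_pmf Let_def nn_integral_return_pmf zero_le fst_conv cost)
qed

context
  fixes \<alpha>L \<alpha>R :: real and nL nR :: nat
  assumes \<alpha>L: "\<alpha>L > 1" and \<alpha>R: "\<alpha>R > 1"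
    and integrable_L: "integrable (measure_pmf (zipf_pmf \<alpha>L)) real"
    and integrable_R: "integrable (measure_pmf (zipf_pmf \<alpha>R)) real"
    and balanced: "real nL * zipf_mean \<alpha>L = real nR * zipf_mean \<alpha>R"
begin

lemma nn_integral_sampler_time_le:
  "(\<integral>\<^sup>+r. of_nat (fst r) \<partial>sampler_pmf \<alpha>L \<alpha>R nL nR) \<le> ennreal (7 * zipf_mean \<alpha>L * real nL)"
proof -
  define \<mu>L \<mu>R where "\<mu>L = zipf_mean \<alpha>L" and "\<mu>R = zipf_mean \<alpha>R"
  define D where "D = real nR * \<mu>R"
  define SL SR where "SL w = (\<Sum>u<nL. w u)" and "SR w = (\<Sum>v<nR. w v)" for w :: "nat \<Rightarrow> nat"
  have \<mu>: "\<mu>L \<ge> 1" "\<mu>R \<ge> 1"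
    using zipf_mean_ge_1 \<alpha>L \<alpha>R integrable_L integrable_R by (auto simp: \<mu>L_def \<mu>R_def)
  have D: "D = real nL * \<mu>L" "D \<ge> 0"
    using balanced \<mu> by (auto simp: D_def \<mu>L_def \<mu>R_def)
  have "(\<integral>\<^sup>+r. of_nat (fst r) \<partial>sampler_pmf \<alpha>L \<alpha>R nL nR)
      \<le> (\<integral>\<^sup>+wL. \<integral>\<^sup>+wR. of_nat (2 * nL + 2 * nR + SL wL + SR wR)
            + ennreal (1 / D) * of_nat (SL wL) * of_nat (SR wR) \<partial>zipf_weights nR \<alpha>R \<partial>zipf_weights nL \<alpha>L)"
    unfolding nn_integral_sampler_pmf(2)[OF D_def[unfolded \<mu>R_def] D(2)]
    using sampler_cost_le[OF D(2), of nL nR] unfolding SL_def[symmetric] SR_def[symmetric]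
    by (intro nn_integral_mono) auto
  also have "\<dots> = of_nat (2 * nL + 2 * nR) + ennreal (real nL * \<mu>L) + ennreal (real nR * \<mu>R)
      + ennreal (1 / D) * ennreal (real nL * \<mu>L) * ennreal (real nR * \<mu>R)"
    using nn_integral_zipf_weights_sum[OF integrable_L, of nL] nn_integral_zipf_weights_sum[OF integrable_R, of nR]
    by (simp add: nn_integral_add nn_integral_cmult nn_integral_multc measure_pmf.emeasure_space_1
        SL_def SR_def \<mu>L_def \<mu>R_def algebra_simps)
  also have "\<dots> = ennreal (2 * nL + 2 * nR + 3 * (\<mu>L * nL))"
    using \<mu> D by (simp add: D_def ennreal_of_nat_eq_real_of_nat flip: ennreal_plus ennreal_mult del: ennreal_plus)
  also have "\<dots> \<le> ennreal (7 * \<mu>L * nL)"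
    using \<mu> D mult_right_mono[OF \<mu>(1), of "real nL"] mult_right_mono[OF \<mu>(2), of "real nR"]
    by (intro ennreal_leI) (simp add: D_def mult.commute)
  finally show ?thesis by (simp add: \<mu>L_def)
qed

lemma nn_integral_sampler_edges_ge:
  "ennreal (real nL / zipf_mean \<alpha>R) \<le> (\<integral>\<^sup>+r. of_nat (snd r) \<partial>sampler_pmf \<alpha>L \<alpha>R nL nR)"
proof (cases "nL = 0")
  case False
  define D where "D = real nR * zipf_mean \<alpha>R"
  have \<mu>: "zipf_mean \<alpha>L \<ge> 1" "zipf_mean \<alpha>R \<ge> 1"
    using zipf_mean_ge_1 \<alpha>L \<alpha>R integrable_L integrable_R by auto
  have "D = real nL * zipf_mean \<alpha>L"
    using balanced by (simp add: D_def)
  with False \<mu> have D: "D \<ge> 1"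
    using mult_mono[of 1 "real nL" 1 "zipf_mean \<alpha>L"] by simp
  then have "nR \<noteq> 0" by (cases nR) (auto simp: D_def)
  have "real nL / zipf_mean \<alpha>R = real nL * real nR / D"
    using \<open>nR \<noteq> 0\<close> by (simp add: D_def)
  also have "ennreal \<dots> \<le> (\<integral>\<^sup>+wL. \<integral>\<^sup>+wR. ennreal (conditional_edge_mean nL nR D wL wR)
      \<partial>zipf_weights nR \<alpha>R \<partial>zipf_weights nL \<alpha>L)"
    by (intro measure_pmf.nn_integral_ge_const AE_pmfI ennreal_leI conditional_edge_mean_ge[OF D]
        zipf_weights_ge_1[OF \<alpha>L] zipf_weights_ge_1[OF \<alpha>R])
  also have "\<dots> = (\<integral>\<^sup>+r. of_nat (snd r) \<partial>sampler_pmf \<alpha>L \<alpha>R nL nR)"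
    using D by (intro nn_integral_sampler_pmf(1)[symmetric]) (simp_all add: D_def)
  finally show ?thesis .
qed simp

lemma expected_time_le: "expected_time \<alpha>L \<alpha>R nL nR \<le> 7 * zipf_mean \<alpha>L * real nL"
proof -
  have "expected_time \<alpha>L \<alpha>R nL nR = enn2real (\<integral>\<^sup>+r. of_nat (fst r) \<partial>sampler_pmf \<alpha>L \<alpha>R nL nR)"
    unfolding expected_time_def ennreal_of_nat_eq_real_of_nat by (rule integral_eq_nn_integral) auto
  then show ?thesis
    using nn_integral_sampler_time_le zipf_mean_ge_1[OF \<alpha>L integrable_L] by (simp add: enn2real_leI)
qed

lemma expected_edges_ge: "real nL / zipf_mean \<alpha>R \<le> expected_edges \<alpha>L \<alpha>R nL nR"
proof -
  define D where "D = real nR * zipf_mean \<alpha>R"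
  have "D \<ge> 0"
    using zipf_mean_ge_1[OF \<alpha>R integrable_R] by (simp add: D_def)
  have "(\<integral>\<^sup>+r. of_nat (snd r) \<partial>sampler_pmf \<alpha>L \<alpha>R nL nR) \<le> (\<integral>\<^sup>+r. of_nat (fst r) \<partial>sampler_pmf \<alpha>L \<alpha>R nL nR)"
    unfolding nn_integral_sampler_pmf[OF D_def \<open>D \<ge> 0\<close>] by (intro nn_integral_mono) simp
  also have "\<dots> < \<top>"
    using nn_integral_sampler_time_le by (simp add: order.strict_trans1)
  finally have "enn2real (ennreal (real nL / zipf_mean \<alpha>R))
      \<le> enn2real (\<integral>\<^sup>+r. of_nat (snd r) \<partial>sampler_pmf \<alpha>L \<alpha>R nL nR)"
    by (intro enn2real_mono nn_integral_sampler_edges_ge)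
  also have "\<dots> = expected_edges \<alpha>L \<alpha>R nL nR"
    unfolding expected_edges_def ennreal_of_nat_eq_real_of_nat by (rule integral_eq_nn_integral[symmetric]) auto
  finally show ?thesis
    using zipf_mean_ge_1[OF \<alpha>R integrable_R] by simp
qed

lemma expected_time_le_edges:
  "expected_time \<alpha>L \<alpha>R nL nR \<le> 7 * zipf_mean \<alpha>L * zipf_mean \<alpha>R * expected_edges \<alpha>L \<alpha>R nL nR"
proof -
  have \<mu>: "zipf_mean \<alpha>L \<ge> 1" "zipf_mean \<alpha>R \<ge> 1"
    using zipf_mean_ge_1 \<alpha>L \<alpha>R integrable_L integrable_R by auto
  have "expected_time \<alpha>L \<alpha>R nL nR \<le> 7 * zipf_mean \<alpha>L * zipf_mean \<alpha>R * (real nL / zipf_mean \<alpha>R)"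
    using expected_time_le \<mu> by simp
  also have "\<dots> \<le> 7 * zipf_mean \<alpha>L * zipf_mean \<alpha>R * expected_edges \<alpha>L \<alpha>R nL nR"
    using expected_edges_ge \<mu> by (intro mult_left_mono) auto
  finally show ?thesis .
qed

end

theorem mainTheorem13:
  fixes \<alpha>L \<alpha>R :: real
  assumes "\<alpha>L > 1" and "\<alpha>R > 1"
    and "integrable (measure_pmf (zipf_pmf \<alpha>L)) real"
    and "integrable (measure_pmf (zipf_pmf \<alpha>R)) real"
  shows "(\<exists>C>0. \<forall>nL nR :: nat. real nL * zipf_mean \<alpha>L = real nR * zipf_mean \<alpha>R \<longrightarrow>
            expected_time \<alpha>L \<alpha>R nL nR
              \<le> C * (real nL powr (1 / (\<alpha>L - 1)) * real nR powr (1 / (\<alpha>R - 1))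
                     + zipf_mean \<alpha>L * real nL))
       \<and> (\<alpha>L > 3 \<and> \<alpha>R > 3 \<longrightarrow>
           (\<exists>C>0. \<forall>nL nR :: nat. real nL * zipf_mean \<alpha>L = real nR * zipf_mean \<alpha>R \<longrightarrow>
              expected_time \<alpha>L \<alpha>R nL nR \<le> C * expected_edges \<alpha>L \<alpha>R nL nR))"
proof -
  have "zipf_mean \<alpha>L \<ge> 1" "zipf_mean \<alpha>R \<ge> 1"
    using assms zipf_mean_ge_1 by blast+
  then have "0 < 7 * zipf_mean \<alpha>L * zipf_mean \<alpha>R" and "0 < (7 :: real)"
    by simp_all
  moreover have "7 * zipf_mean \<alpha>L * real nL
      \<le> 7 * (real nL powr (1 / (\<alpha>L - 1)) * real nR powr (1 / (\<alpha>R - 1)) + zipf_mean \<alpha>L * real nL)"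
    for nL nR :: nat
    by simp
  ultimately show ?thesis
    using expected_time_le[OF assms] expected_time_le_edges[OF assms]
    by (intro conjI impI) (blast intro: order.trans)+
qed

end
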